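(* Let $p,q$ be distinct odd primes with $p\equiv 1\pmod 4$, $q\equiv 3\pmod 4$ and $\gcd(p-1,q-1)=2$, having a common primitive root $g$. Let $s=(s_0,\dots,s_{N-1})$ be the balanced Whiteman generalized cyclotomic sequence of period $N=pq$ defined in the context, and let $A=(a_{i,j})_{0\le i,j\le N-1}$ be the $N\times N$ rational matrix with $a_{i,j}=s_{(i-j)\bmod N}$. Then $$\det(A)=\frac{pq-1}{2}\left(\frac{1-p}{4}\right)^{\frac{p-1}{2}}\left(\frac{1+q}{4}\right)^{\frac{q-1}{2}}\Delta^{e/2},$$ where $e=(p-1)(q-1)/2$, $d=\frac{q-p-2}{4}$, and $$\Delta=\frac{(1+pq)^{2}}{16}+\frac{\epsilon-d}{2}\,pq+d^{2}+\frac{3}{2}d+\frac{1}{2}$$ for some sign $\epsilon\in\{1,-1\}$.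
   Context: Let $N=pq$ and $e=(p-1)(q-1)/2$. Let $x$ be the unique element of $\mathbb{Z}_N$ with $x\equiv g\pmod p$ and $x\equiv 1\pmod q$. The Whiteman generalized cyclotomic classes of order 2 are $D_i=\{g^{s}x^{i}\bmod N: s=0,1,\dots,e-1\}$ for $i=0,1$; they partition $\mathbb{Z}_N^{*}$. For a prime $r\in\{p,q\}$, let $D_0^{(r)}=\{g^{2t}\bmod r: 0\le t\le \frac{r-1}{2}-1\}$ and $D_1^{(r)}=\{g^{2t+1}\bmod r: 0\le t\le \frac{r-1}{2}-1\}$. For $j=0,1$ let $D_j^{(p)}q=\{yq\bmod N: y\in D_j^{(p)}\}$ and $D_j^{(q)}p=\{yp\bmod N: y\in D_j^{(q)}\}$. Define $C_0=\{0\}\cup D_0\cup D_0^{(p)}q\cup D_0^{(q)}p$ and $C_1=D_1\cup D_1^{(p)}q\cup D_1^{(q)}p$, so $\mathbb{Z}_N=C_0\cup C_1$ (disjoint). The sequence $s=\{s_i\}$ of period $N$ is defined by $s_i=0$ if $i\bmod N\in C_0$ and $s_i=1$ if $i\bmod N\in C_1$. *)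

theory Defs
  imports "HOL-Number_Theory.Number_Theory" "Jordan_Normal_Form.Determinant"
begin

definition wm_e :: "nat \<Rightarrow> nat \<Rightarrow> nat" where
  "wm_e p q = (p - 1) * (q - 1) div 2"

definition wm_x :: "nat \<Rightarrow> nat \<Rightarrow> nat \<Rightarrow> nat" where
  "wm_x p q g = (THE x. x < p * q \<and> [x = g] (mod p) \<and> [x = 1] (mod q))"

definition wm_D :: "nat \<Rightarrow> nat \<Rightarrow> nat \<Rightarrow> nat \<Rightarrow> nat set" where
  "wm_D p q g i = {(g ^ s * wm_x p q g ^ i) mod (p * q) | s. s < wm_e p q}"

definition cyc_D :: "nat \<Rightarrow> nat \<Rightarrow> nat \<Rightarrow> nat set" where
  "cyc_D r g j = {g ^ (2 * t + j) mod r | t. t < (r - 1) div 2}"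

definition wm_C0 :: "nat \<Rightarrow> nat \<Rightarrow> nat \<Rightarrow> nat set" where
  "wm_C0 p q g = {0} \<union> wm_D p q g 0
     \<union> {(y * q) mod (p * q) | y. y \<in> cyc_D p g 0}
     \<union> {(y * p) mod (p * q) | y. y \<in> cyc_D q g 0}"

definition wm_C1 :: "nat \<Rightarrow> nat \<Rightarrow> nat \<Rightarrow> nat set" where
  "wm_C1 p q g = wm_D p q g 1
     \<union> {(y * q) mod (p * q) | y. y \<in> cyc_D p g 1}
     \<union> {(y * p) mod (p * q) | y. y \<in> cyc_D q g 1}"

definition wm_seq :: "nat \<Rightarrow> nat \<Rightarrow> nat \<Rightarrow> nat \<Rightarrow> rat" where
  "wm_seq p q g i = (if i mod (p * q) \<in> wm_C1 p q g then 1 else 0)"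

definition wm_matrix :: "nat \<Rightarrow> nat \<Rightarrow> nat \<Rightarrow> rat mat" where
  "wm_matrix p q g = mat (p * q) (p * q)
     (\<lambda>(i, j). wm_seq p q g (nat ((int i - int j) mod int (p * q))))"

end

theory Submission
  imports Defs
begin

text \<open>Write \<open>\<chi>\<^sub>r\<close> for the Legendre symbol modulo \<open>r\<close> and \<open>c = \<chi>\<^sub>p(q) = \<chi>\<^sub>q(p)\<close>
  (quadratic reciprocity, as \<open>p \<equiv> 1 mod 4\<close>). In terms of these symbols the classes say
  \<open>2 s\<^sub>t = 1 - B\<^sub>t\<close> with
  \<open>B\<^sub>t = [t = 0] + c [q | t] \<chi>\<^sub>p(t) + c [p | t] \<chi>\<^sub>q(t) + \<chi>\<^sub>p(t) \<chi>\<^sub>q(t)\<close>,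
  and the circulant matrix of \<open>B\<close> factors as \<open>(I + c X\<^sub>p)(I + c X\<^sub>q)\<close>, where
  \<open>X\<^sub>p(i, j) = \<chi>\<^sub>p(i - j)\<close> if \<open>q | i - j\<close> and \<open>0\<close> otherwise (symmetrically for \<open>X\<^sub>q\<close>).
  Jacobsthal's evaluation of \<open>\<Sum>\<^sub>a \<chi>(a) \<chi>(a + d)\<close> gives
  \<open>X\<^sub>p\<^sup>2 = \<chi>\<^sub>p(-1) (p I - K)\<close>, \<open>K\<close> the indicator of congruence modulo \<open>q\<close>, hence
  \<open>det (I + t X\<^sub>p) det (I - t X\<^sub>p) = (1 - \<chi>\<^sub>p(-1) p t\<^sup>2)\<^bsup>N - q\<^esup>\<close>. Renumbering by a unit
  that is a non-residue modulo \<open>p\<close> and \<open>1\<close> modulo \<open>q\<close> shows that \<open>det (I + t X\<^sub>p)\<close> is even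
  in \<open>t\<close>, so as a polynomial it equals \<open>(1 - \<chi>\<^sub>p(-1) p t\<^sup>2)\<^bsup>(N - q)/2\<^esup>\<close>. Finally \<open>B\<close> has
  row sums \<open>1\<close>, which gives \<open>det (J - B) = (N - 1) det B\<close>. The result is the stated
  formula with \<open>\<epsilon> = -1\<close>, for which \<open>\<Delta> = ((p - 1)(q + 1)/4)\<^sup>2\<close>.\<close>

section \<open>The Legendre symbol\<close>

lemma Legendre_cong:
  assumes "[a = b] (mod m)"
  shows "Legendre a m = Legendre b m"
proof -
  have "[a = 0] (mod m) \<longleftrightarrow> [b = 0] (mod m)" and "QuadRes m a \<longleftrightarrow> QuadRes m b"
    using assms unfolding QuadRes_def by (meson cong_sym cong_trans)+
  then show ?thesis
    unfolding Legendre_def by simp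
qed

lemma Legendre_mod: "Legendre (a mod m) m = Legendre a m"
  by (rule Legendre_cong) (simp add: cong_def)

lemma Legendre_cong_nat: "[a = b] (mod r) \<Longrightarrow> Legendre (int a) (int r) = Legendre (int b) (int r)"
  by (rule Legendre_cong) (simp add: cong_int_iff)

lemma Legendre_eq_0_iff: "Legendre a m = 0 \<longleftrightarrow> [a = 0] (mod m)"
  by (simp add: Legendre_def)

lemma Legendre_eq_0_iff_dvd: "Legendre (int t) (int r) = 0 \<longleftrightarrow> r dvd t"
  by (simp add: Legendre_eq_0_iff cong_0_iff)

lemma Legendre_values: "Legendre a m = 0 \<or> Legendre a m = 1 \<or> Legendre a m = -1"
  by (simp add: Legendre_def)

lemma abs_Legendre_le_1: "\<bar>Legendre a m\<bar> \<le> 1"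
  by (simp add: Legendre_def)

lemma Legendre_unit_values:
  "\<not> [a = 0] (mod m) \<Longrightarrow> Legendre a m = 1 \<or> Legendre a m = -1"
  by (simp add: Legendre_def)

lemma Legendre_unit_values_nat:
  "\<not> r dvd x \<Longrightarrow> Legendre (int x) (int r) = 1 \<or> Legendre (int x) (int r) = -1"
  by (simp add: Legendre_def cong_0_iff)

lemma Legendre_square_eq_1:
  "\<not> [a = 0] (mod m) \<Longrightarrow> Legendre a m * Legendre a m = 1"
  by (simp add: Legendre_def)

lemma cong_imp_eq_if_abs_le_1:
  fixes x y :: int
  assumes "[x = y] (mod int r)" "2 < r" "\<bar>x\<bar> \<le> 1" "\<bar>y\<bar> \<le> 1"
  shows "x = y"
proof -
  obtain k where k: "x - y = int r * k"
    using assms(1) by (auto simp: cong_iff_dvd_diff cong_sym_eq dvd_def)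
  have "\<bar>x - y\<bar> < int r"
    using assms(2-4) by linarith
  then have "k = 0"
    using k by (simp add: abs_mult) (smt (verit) mult_le_cancel_left1 of_nat_0_le_iff)
  with k show ?thesis
    by simp
qed

text \<open>The next two facts are Euler's criterion made exact: both sides lie in
  \<open>{-1, 0, 1}\<close>, and such numbers are determined by their residue modulo a prime
  \<open>r > 2\<close>.\<close>

lemma Legendre_mult:
  assumes "prime r" "2 < r"
  shows "Legendre (a * b) (int r) = Legendre a (int r) * Legendre b (int r)"
proof -
  have "[Legendre (a * b) (int r) = (a * b) ^ ((r - 1) div 2)] (mod int r)"
    and "[Legendre a (int r) * Legendre b (int r)
          = a ^ ((r - 1) div 2) * b ^ ((r - 1) div 2)] (mod int r)"
    using euler_criterion assms cong_mult by blast+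
  then have "[Legendre (a * b) (int r) = Legendre a (int r) * Legendre b (int r)] (mod int r)"
    by (metis cong_sym cong_trans power_mult_distrib)
  moreover have "\<bar>Legendre a (int r) * Legendre b (int r)\<bar> \<le> 1"
    using abs_Legendre_le_1 by (simp add: abs_mult mult_le_one)
  ultimately show ?thesis
    using cong_imp_eq_if_abs_le_1 assms(2) abs_Legendre_le_1 by blast
qed

lemma Legendre_minus_one:
  assumes "prime r" "2 < r"
  shows "Legendre (-1) (int r) = (-1) ^ ((r - 1) div 2)"
proof -
  have "[Legendre (-1) (int r) = (-1) ^ ((r - 1) div 2)] (mod int r)"
    using euler_criterion assms by blast
  moreover have "\<bar>(-1::int) ^ ((r - 1) div 2)\<bar> \<le> 1"
    by (simp add: power_abs)
  ultimately show ?thesis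
    using cong_imp_eq_if_abs_le_1 assms(2) abs_Legendre_le_1 by blast
qed

lemma Legendre_primroot:
  assumes "prime r" "2 < r" "residue_primroot r g"
  shows "Legendre (int g) (int r) = -1"
proof -
  have cop: "coprime r g" and ord: "ord r g = r - 1"
    using assms by (auto simp: residue_primroot_def totient_prime)
  have nonzero: "\<not> [int g = 0] (mod int r)"
  proof
    assume "[int g = 0] (mod int r)"
    then have "r dvd g"
      by (simp add: cong_0_iff flip: of_nat_dvd_iff)
    then have "r dvd gcd r g"
      by simp
    with cop assms(1) show False
      by (simp add: prime_gt_1_nat)
  qed
  have "[Legendre (int g) (int r) = int g ^ ((r - 1) div 2)] (mod int r)"
    using euler_criterion assms by blast
  moreover have "\<not> [int g ^ ((r - 1) div 2) = 1] (mod int r)"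
  proof
    assume "[int g ^ ((r - 1) div 2) = 1] (mod int r)"
    then have "[g ^ ((r - 1) div 2) = 1] (mod r)"
      by (metis cong_int_iff of_nat_1 of_nat_power)
    then have "ord r g dvd (r - 1) div 2"
      by (simp add: ord_divides')
    moreover have "(r - 1) div 2 > 0"
      using assms by auto
    ultimately have "r - 1 \<le> (r - 1) div 2"
      using ord by (metis dvd_imp_le)
    then show False
      using assms by auto
  qed
  ultimately show ?thesis
    using nonzero Legendre_values[of "int g" "int r"]
    by (auto simp: Legendre_def cong_sym_eq split: if_splits)
qed

lemma Legendre_one: "prime r \<Longrightarrow> Legendre 1 (int r) = 1"
  unfolding Legendre_def QuadRes_def
  by (auto simp: cong_def prime_gt_1_nat intro: exI[of _ 1])

lemma Legendre_power:
  assumes "prime r" "2 < r"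
  shows "Legendre (a ^ k) (int r) = Legendre a (int r) ^ k"
  by (induction k) (simp_all add: Legendre_one Legendre_mult assms)

lemma Legendre_primroot_power:
  assumes "prime r" "2 < r" "residue_primroot r g"
  shows "Legendre (int g ^ k) (int r) = (-1) ^ k"
  using Legendre_power[OF assms(1,2)] Legendre_primroot[OF assms] by simp

lemma Legendre_nonresidue_exists:
  assumes "prime r" "2 < r"
  obtains g :: nat where "Legendre (int g) (int r) = -1"
  using prime_primitive_root_exists[OF prime_gt_1_nat[OF assms(1)] assms(1)] Legendre_primroot[OF assms] by blast

lemma primroot_discrete_log:
  assumes "prime r" "residue_primroot r g" "\<not> r dvd t"
  obtains a where "a < r - 1" "[g ^ a = t] (mod r)"
proof -
  have r1: "1 < r"
    using assms(1) prime_gt_1_nat by blast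
  have "0 < t mod r"
    using assms(3) by (simp add: dvd_eq_mod_eq_0 gr0I)
  moreover have "coprime (t mod r) r"
    using assms(1,3) by (metis coprime_commute coprime_mod_left_iff dvd_eq_mod_eq_0
        prime_imp_coprime mod_greater_zero_iff_not_dvd r1 not_one_less_zero)
  ultimately have "t mod r \<in> totatives r"
    using r1 by (simp add: totatives_def less_imp_le)
  then obtain a where "a < totient r" "g ^ a mod r = t mod r"
    using residue_primroot_is_generator[OF r1 assms(2)] unfolding bij_betw_def by force
  with assms(1) that show ?thesis
    by (auto simp: totient_prime cong_def)
qed

section \<open>Character sums\<close>

lemma sum_affine_reindex_mod_prime:
  fixes f :: "int \<Rightarrow> 'a::comm_monoid_add"
  assumes r: "prime r" and u: "\<not> [u = 0] (mod int r)"
    and periodic: "\<And>x. f (x mod int r) = f x"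
  shows "(\<Sum>a<r. f (u * int a + v)) = (\<Sum>a<r. f (int a))"
proof -
  define h where "h a = nat ((u * int a + v) mod int r)" for a
  have r_pos: "int r > 0"
    using r prime_gt_0_nat by simp
  have "prime (int r)" and "\<not> int r dvd u"
    using r u by (simp_all add: cong_0_iff)
  then have "coprime u (int r)"
    using prime_imp_coprime coprime_commute by blast
  then have inj: "inj_on h {..<r}"
    by (auto simp: inj_on_def h_def r_pos nat_eq_iff2 cong_def[symmetric] cong_add_rcancel
        cong_mult_lcancel cong_int_iff) (simp add: cong_def)
  have "h ` {..<r} = {..<r}"
  proof (rule card_subset_eq)
    show "h ` {..<r} \<subseteq> {..<r}"
      using r_pos by (auto simp: h_def nat_less_iff)
  qed (use inj in \<open>simp_all add: card_image\<close>)
  then have "(\<Sum>a<r. f (int a)) = (\<Sum>a\<in>h ` {..<r}. f (int a))"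
    by simp
  also have "\<dots> = (\<Sum>a<r. f (int (h a)))"
    using inj by (simp add: sum.reindex)
  also have "\<dots> = (\<Sum>a<r. f (u * int a + v))"
    using r_pos by (intro sum.cong) (auto simp: h_def periodic)
  finally show ?thesis
    by simp
qed

context
  fixes r :: nat
  assumes r: "prime r" "2 < r"
begin

abbreviation \<chi> :: "int \<Rightarrow> int" where "\<chi> a \<equiv> Legendre a (int r)"

lemma Legendre_sum_shift: "(\<Sum>a<r. \<chi> (int a + v)) = 0"
proof -
  obtain g where g: "\<chi> (int g) = -1"
    using Legendre_nonresidue_exists r by blast
  then have g_unit: "\<not> [int g = 0] (mod int r)"
    by (auto simp flip: Legendre_eq_0_iff)
  have "(\<Sum>a<r. \<chi> (int a)) = (\<Sum>a<r. \<chi> (int g * int a + 0))"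
    using sum_affine_reindex_mod_prime[OF r(1) g_unit, of \<chi> 0] Legendre_mod by simp
  also have "\<dots> = - (\<Sum>a<r. \<chi> (int a))"
    by (simp add: Legendre_mult[OF r] g sum_negf)
  finally have "(\<Sum>a<r. \<chi> (int a)) = 0"
    by simp
  then show ?thesis
    using sum_affine_reindex_mod_prime[OF r(1), of 1 \<chi> v] Legendre_mod r(2)
    by (simp add: cong_def)
qed

lemma Legendre_sum_square: "(\<Sum>a<r. \<chi> (int a) * \<chi> (int a)) = int r - 1"
proof -
  have "(\<Sum>a<r. \<chi> (int a) * \<chi> (int a)) = (\<Sum>a\<in>{..<r} - {0}. \<chi> (int a) * \<chi> (int a))"
    by (simp add: sum.remove[of "{..<r}" 0] Legendre_def prime_gt_0_nat r)
  also have "\<dots> = (\<Sum>a\<in>{..<r} - {0}. 1)"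
    by (intro sum.cong refl Legendre_square_eq_1) (auto simp: cong_0_iff)
  also have "\<dots> = int r - 1"
    using r by (simp add: prime_gt_0_nat of_nat_diff)
  finally show ?thesis .
qed

lemma Legendre_autocorrelation_scale:
  assumes "\<not> [d = 0] (mod int r)"
  shows "(\<Sum>a<r. \<chi> (int a) * \<chi> (int a + d)) = (\<Sum>a<r. \<chi> (int a) * \<chi> (int a + 1))"
proof -
  have "(\<Sum>a<r. \<chi> (int a) * \<chi> (int a + d)) = (\<Sum>a<r. \<chi> (d * int a + 0) * \<chi> (d * int a + 0 + d))"
    by (rule sum_affine_reindex_mod_prime[OF r(1) assms, of "\<lambda>x. \<chi> x * \<chi> (x + d)" 0, symmetric])
       (metis Legendre_mod mod_add_left_eq)
  also have "\<dots> = (\<Sum>a<r. (\<chi> d * \<chi> d) * (\<chi> (int a) * \<chi> (int a + 1)))"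
    by (intro sum.cong refl) (simp add: Legendre_mult[OF r, symmetric] algebra_simps)
  also have "\<dots> = (\<Sum>a<r. \<chi> (int a) * \<chi> (int a + 1))"
    using Legendre_square_eq_1[OF assms] by simp
  finally show ?thesis .
qed

lemma Legendre_autocorrelation_total: "(\<Sum>d<r. \<Sum>a<r. \<chi> (int a) * \<chi> (int a + int d)) = 0"
proof -
  have "(\<Sum>d<r. \<Sum>a<r. \<chi> (int a) * \<chi> (int a + int d))
      = (\<Sum>a<r. \<chi> (int a) * (\<Sum>d<r. \<chi> (int d + int a)))"
    by (subst sum.swap) (simp add: sum_distrib_left add.commute)
  then show ?thesis
    by (simp add: Legendre_sum_shift)
qed

text \<open>The autocorrelation is constant off \<open>d = 0\<close> by scaling, and its total over all
  shifts vanishes; this pins the constant down to \<open>-1\<close>.\<close>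

lemma Legendre_autocorrelation:
  "(\<Sum>a<r. \<chi> (int a) * \<chi> (int a + d)) = (if [d = 0] (mod int r) then int r - 1 else -1)"
proof -
  define S where "S d = (\<Sum>a<r. \<chi> (int a) * \<chi> (int a + d))" for d
  have periodic: "S d = S d'" if "[d = d'] (mod int r)" for d d'
    unfolding S_def using that by (intro sum.cong refl) (metis Legendre_cong cong_add_lcancel)
  have S0: "S 0 = int r - 1"
    using Legendre_sum_square by (simp add: S_def)
  have zero: "0 \<in> {..<r}"
    using r by (simp add: prime_gt_0_nat)
  have "0 = S 0 + (\<Sum>d\<in>{..<r} - {0}. S (int d))"
    using Legendre_autocorrelation_total sum.remove[OF _ zero, of "\<lambda>d. S (int d)"]
    unfolding S_def by simp
  also have "(\<Sum>d\<in>{..<r} - {0}. S (int d)) = (\<Sum>d\<in>{..<r} - {0}. S 1)"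
    unfolding S_def by (intro sum.cong refl Legendre_autocorrelation_scale) (auto simp: cong_0_iff)
  finally have "0 = (int r - 1) + (int r - 1) * S 1"
    using r S0 by (simp add: prime_gt_0_nat of_nat_diff)
  then have "(int r - 1) * (S 1 + 1) = 0"
    by (simp add: distrib_left)
  with r have "S 1 = -1"
    by auto
  moreover have "S d = S 1" if "\<not> [d = 0] (mod int r)"
    using that unfolding S_def by (rule Legendre_autocorrelation_scale)
  moreover have "S d = S 0" if "[d = 0] (mod int r)"
    using that periodic by blast
  ultimately show ?thesis
    using S0 by (auto simp: S_def)
qed

lemma Legendre_correlation:
  "(\<Sum>a<r. \<chi> (i - int a) * \<chi> (int a - j)) =
     \<chi> (-1) * (if [i = j] (mod int r) then int r - 1 else -1)"
proof -
  have "(\<Sum>a<r. \<chi> (i - int a) * \<chi> (int a - j)) = \<chi> (-1) * (\<Sum>a<r. \<chi> (int a - i) * \<chi> (int a - j))"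
    by (simp add: sum_distrib_left Legendre_mult[OF r, symmetric] algebra_simps)
  also have "(\<Sum>a<r. \<chi> (int a - i) * \<chi> (int a - j))
      = (\<Sum>a<r. \<chi> (1 * int a + (- i)) * \<chi> (1 * int a + (- i) + (i - j)))"
    by simp
  also have "\<dots> = (\<Sum>a<r. \<chi> (int a) * \<chi> (int a + (i - j)))"
    by (rule sum_affine_reindex_mod_prime[OF r(1), of 1 "\<lambda>x. \<chi> x * \<chi> (x + (i - j))"])
       (use r in \<open>auto simp: cong_def\<close>, metis Legendre_mod mod_add_left_eq)
  also have "\<dots> = (if [i = j] (mod int r) then int r - 1 else -1)"
    by (simp add: Legendre_autocorrelation cong_iff_dvd_diff cong_0_iff)
  finally show ?thesis .
qed

end

section \<open>Determinants\<close>

lemma mat_mult_mat: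
  "mat n m f * mat m k h = mat n k (\<lambda>(i,j). \<Sum>l = 0..<m. f (i,l) * h (l,j))"
  by (rule eq_matI) (auto simp: scalar_prod_def)

lemma mat_row_sum_mult_eq_1:
  fixes A B :: "'a::comm_ring_1 mat"
  assumes A: "A \<in> carrier_mat n n" and B: "B \<in> carrier_mat n n"
    and "\<And>i. i < n \<Longrightarrow> (\<Sum>k = 0..<n. A $$ (i,k)) = 1"
    and "\<And>i. i < n \<Longrightarrow> (\<Sum>k = 0..<n. B $$ (i,k)) = 1"
    and i: "i < n"
  shows "(\<Sum>k = 0..<n. (A * B) $$ (i,k)) = 1"
proof -
  have "(\<Sum>k = 0..<n. (A * B) $$ (i,k)) = (\<Sum>k = 0..<n. \<Sum>l = 0..<n. A $$ (i,l) * B $$ (l,k))"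
    using A B i by (intro sum.cong refl) (auto simp: scalar_prod_def)
  also have "\<dots> = (\<Sum>l = 0..<n. A $$ (i,l) * (\<Sum>k = 0..<n. B $$ (l,k)))"
    by (subst sum.swap) (simp add: sum_distrib_left)
  also have "\<dots> = (\<Sum>l = 0..<n. A $$ (i,l))"
    using assms(4) by (intro sum.cong refl) auto
  also have "\<dots> = 1"
    using assms(3) i .
  finally show ?thesis .
qed

lemma det_mat_permute_rows_cols:
  assumes s: "\<sigma> permutes {0..<n}"
  shows "det (mat n n (\<lambda>(i,j). f (\<sigma> i) (\<sigma> j))) = det (mat n n (\<lambda>(i,j). f i j))"
proof -
  have si: "\<And>i. i < n \<Longrightarrow> \<sigma> i < n"
    using permutes_in_image[OF s] by auto
  define A where "A = mat n n (\<lambda>(i,j). f i (\<sigma> j))"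
  define B where "B = mat n n (\<lambda>(i,j). f j i)"
  have A: "A \<in> carrier_mat n n" and B: "B \<in> carrier_mat n n"
    by (auto simp: A_def B_def)
  have "det (mat n n (\<lambda>(i,j). f (\<sigma> i) (\<sigma> j))) = det (mat n n (\<lambda>(i,j). A $$ (\<sigma> i, j)))"
    by (intro arg_cong[where f = det] eq_matI) (auto simp: A_def si)
  also have "\<dots> = of_int (sign \<sigma>) * det (transpose_mat A)"
    using det_permute_rows[OF A s] det_transpose[OF A] by simp
  also have "transpose_mat A = mat n n (\<lambda>(i,j). B $$ (\<sigma> i, j))"
    by (rule eq_matI) (auto simp: A_def B_def si)
  also have "det \<dots> = of_int (sign \<sigma>) * det (transpose_mat B)"
    using det_permute_rows[OF B s] det_transpose[OF B] by simp
  also have "transpose_mat B = mat n n (\<lambda>(i,j). f i j)"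
    by (rule eq_matI) (auto simp: B_def)
  finally show ?thesis
    by (simp add: sign_def)
qed

lemma det_one_plus_scaled_is_poly:
  "\<exists>F. \<forall>t. det (mat n n (\<lambda>(i,j). (if i = j then 1 else 0) + t * f i j)) = poly F t"
proof -
  define F where "F = (\<Sum>p\<in>{p. p permutes {0..<n}}. [:of_int (sign p):] *
      (\<Prod>i = 0..<n. [:(if i = p i then 1 else 0), f i (p i):]))"
  have "det (mat n n (\<lambda>(i,j). (if i = j then 1 else 0) + t * f i j)) = poly F t" for t
    unfolding det_def'[OF mat_carrier] F_def poly_sum poly_mult poly_prod
    by (intro sum.cong refl arg_cong2[where f = "(*)"] prod.cong) (auto simp: permutes_in_image)
  then show ?thesis
    by blast
qed

lemma poly_eq_if_squares_eq:
  fixes F H :: "'a::{field,ring_char_0} poly"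
  assumes "\<And>t. poly F t ^ 2 = poly H t ^ 2" and "poly F 0 = poly H 0" and "poly H 0 \<noteq> 0"
  shows "F = H"
proof -
  have "poly (F ^ 2) = poly (H ^ 2)"
    using assms(1) by (auto simp: poly_power)
  then have "(F - H) * (F + H) = 0"
    by (simp add: poly_eq_poly_eq_iff power2_eq_square algebra_simps)
  then have "F = H \<or> F = -H"
    by (auto simp: eq_neg_iff_add_eq_0)
  with assms(2,3) show ?thesis
    by auto
qed

lemma card_residue_class:
  assumes "l < m"
  shows "card {j \<in> {0..<c * m}. j mod m = l} = c"
proof -
  have "{j \<in> {0..<c * m}. j mod m = l} = (\<lambda>t. l + m * t) ` {0..<c}"
  proof (intro equalityI subsetI)
    fix j
    assume j: "j \<in> {j \<in> {0..<c * m}. j mod m = l}"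
    then have "j = l + m * (j div m)"
      by (metis (mono_tags) mem_Collect_eq mod_mult_div_eq add.commute)
    moreover have "j div m < c"
      using j assms by (auto simp: div_less_iff_less_mult)
    ultimately show "j \<in> (\<lambda>t. l + m * t) ` {0..<c}"
      by force
  next
    fix j
    assume "j \<in> (\<lambda>t. l + m * t) ` {0..<c}"
    then obtain t where t: "t < c" "j = l + m * t"
      by auto
    have "l + m * t < m * (t + 1)"
      using assms by simp
    also have "\<dots> \<le> m * c"
      using t by (intro mult_le_mono2) simp
    finally show "j \<in> {j \<in> {0..<c * m}. j mod m = l}"
      using t assms by (auto simp: mult.commute)
  qed
  moreover have "inj_on (\<lambda>t. l + m * t) {0..<c}"
    using assms by (auto simp: inj_on_def)
  ultimately show ?thesis
    by (simp add: card_image)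
qed

definition congruence_mat :: "nat \<Rightarrow> nat \<Rightarrow> 'a::comm_ring_1 \<Rightarrow> 'a \<Rightarrow> 'a mat" where
  "congruence_mat n m a b =
     mat n n (\<lambda>(i,j). (if i = j then a else 0) + (if i mod m = j mod m then b else 0))"

definition fold_rows_mat :: "nat \<Rightarrow> nat \<Rightarrow> 'a::comm_ring_1 \<Rightarrow> 'a mat" where
  "fold_rows_mat n m s =
     mat n n (\<lambda>(i,k). (if i = k then 1 else 0) + (if m \<le> i \<and> k = i mod m then s else 0))"

lemma det_fold_rows_mat:
  assumes "0 < m"
  shows "det (fold_rows_mat n m s) = 1"
proof -
  have "det (fold_rows_mat n m s) = prod_list (diag_mat (fold_rows_mat n m s))"
    by (rule det_lower_triangular[of n])
       (auto simp: fold_rows_mat_def, meson mod_less_eq_dividend leD)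
  also have "\<dots> = 1"
    unfolding prod_list_diag_prod fold_rows_mat_def
    using assms by (intro prod.neutral) (auto, metis mod_less_divisor not_le)
  finally show ?thesis .
qed

lemma fold_rows_mat_mult_congruence_mat:
  assumes m: "0 < m" and mn: "m \<le> n"
  shows "fold_rows_mat n m (-1) * congruence_mat n m a b =
    mat n n (\<lambda>(i,j). if m \<le> i then (if i = j then a else 0) - (if j = i mod m then a else 0)
                    else (if i = j then a else 0) + (if i mod m = j mod m then b else 0))"
    (is "_ = mat n n ?TM")
proof (rule eq_matI)
  fix i j
  assume "i < dim_row (mat n n ?TM)" "j < dim_col (mat n n ?TM)"
  then have i: "i < n" and j: "j < n"
    by auto
  have i_mod: "i mod m < n"
    using m mn by (meson mod_less_divisor order_less_le_trans)
  define M where "M k = (if k = j then a else 0) + (if k mod m = j mod m then b else 0)" for k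
  have "(fold_rows_mat n m (-1) * congruence_mat n m a b) $$ (i,j)
      = (\<Sum>k = 0..<n. ((if i = k then 1 else 0) + (if m \<le> i \<and> k = i mod m then - 1 else 0)) * M k)"
    using i j by (simp add: fold_rows_mat_def congruence_mat_def mat_mult_mat M_def)
  also have "\<dots> = (\<Sum>k = 0..<n. if i = k then M k else 0)
                 + (\<Sum>k = 0..<n. if m \<le> i \<and> k = i mod m then - M k else 0)"
    by (subst sum.distrib[symmetric], intro sum.cong refl) (simp add: distrib_right)
  also have "\<dots> = M i - (if m \<le> i then M (i mod m) else 0)"
    using i i_mod by (cases "m \<le> i") simp_all
  also have "\<dots> = ?TM (i,j)"
    by (auto simp: M_def)
  finally show "(fold_rows_mat n m (-1) * congruence_mat n m a b) $$ (i,j) = mat n n ?TM $$ (i,j)"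
    using i j by simp
qed (auto simp: fold_rows_mat_def congruence_mat_def)

lemma sum_residue_class_above:
  fixes x :: "'a::comm_ring_1"
  assumes l: "l < m" and c: "0 < c"
  shows "(\<Sum>j = 0..<c * m. if m \<le> j \<and> l = j mod m then x else 0) = x * (of_nat c - 1)"
proof -
  have "{j \<in> {0..<c * m}. m \<le> j \<and> l = j mod m} = {j \<in> {0..<c * m}. j mod m = l} - {l}"
    using l by auto (metis mod_less not_le)
  moreover have "l \<in> {j \<in> {0..<c * m}. j mod m = l}"
    using l c by (auto intro: less_le_trans[of l m] simp: mult.commute)
  ultimately have "card {j \<in> {0..<c * m}. m \<le> j \<and> l = j mod m} = c - 1"
    using card_residue_class[OF l, of c] by (simp add: card_Diff_singleton)
  then show ?thesis
    using c by (simp add: sum.inter_filter[symmetric] of_nat_diff mult.commute)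
qed

lemma congruence_mat_reduced_mult_fold_rows_mat:
  assumes m: "0 < m" and n: "n = c * m" and c: "0 < c"
  shows "mat n n (\<lambda>(i,j). if m \<le> i then (if i = j then a else 0) - (if j = i mod m then a else 0)
                    else (if i = j then a else 0) + (if i mod m = j mod m then b else 0))
           * fold_rows_mat n m 1 =
    mat n n (\<lambda>(i,l). if m \<le> i then (if i = l then a else 0)
       else if l < m then (if i = l then a + b * of_nat c else 0) else (if i = l mod m then b else 0))"
    (is "mat n n ?TM * _ = mat n n ?R")
proof (rule eq_matI)
  fix i l
  assume "i < dim_row (mat n n ?R)" "l < dim_col (mat n n ?R)"
  then have i: "i < n" and l: "l < n"
    by auto
  have class_sum: "(\<Sum>j = 0..<n. if m \<le> j \<and> l = j mod m then x else 0) = x * (of_nat c - 1)"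
    if "l < m" for x :: 'a
    unfolding n using that c by (rule sum_residue_class_above)
  have not_mod: "m \<le> j \<Longrightarrow> j \<noteq> k mod m" for j k
    using m by (metis mod_less_divisor not_le)
  have "(mat n n ?TM * fold_rows_mat n m 1) $$ (i,l)
      = (\<Sum>j = 0..<n. (if j = l then ?TM (i,j) else 0) + (if m \<le> j \<and> l = j mod m then ?TM (i,j) else 0))"
    using i l unfolding fold_rows_mat_def mat_mult_mat
    by simp (intro sum.cong refl, simp)
  also have "\<dots> = ?TM (i,l) + (\<Sum>j = 0..<n. if m \<le> j \<and> l = j mod m then ?TM (i,j) else 0)"
    using l by (simp add: sum.distrib)
  also have "\<dots> = ?R (i,l)"
  proof (cases "m \<le> i")
    case True
    then have "(\<Sum>j = 0..<n. if m \<le> j \<and> l = j mod m then ?TM (i,j) else 0)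
        = (\<Sum>j = 0..<n. if j = i then (if l = i mod m then a else 0) else 0)"
      by (intro sum.cong refl) (simp add: not_mod)
    with i True show ?thesis
      by auto
  next
    case False
    then have "(\<Sum>j = 0..<n. if m \<le> j \<and> l = j mod m then ?TM (i,j) else 0)
        = (\<Sum>j = 0..<n. if m \<le> j \<and> l = j mod m then (if i = l then b else 0) else 0)"
      by (intro sum.cong refl) auto
    also have "\<dots> = (if i = l \<and> l < m then b * (of_nat c - 1) else 0)"
      using m by (cases "l < m") (auto simp: class_sum intro!: sum.neutral)
    finally show ?thesis
      using False by (cases "l < m"; cases "i = l") (simp_all add: algebra_simps)
  qed
  finally show "(mat n n ?TM * fold_rows_mat n m 1) $$ (i,l) = mat n n ?R $$ (i,l)"
    using i l by simp
qed (auto simp: fold_rows_mat_def)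

text \<open>Row reduction: subtracting the representative row modulo \<open>m\<close> and then adding the
  columns of each class onto its representative makes the matrix upper triangular.\<close>

lemma det_congruence_mat:
  assumes m: "0 < m" and n: "n = c * m" and c: "0 < c"
  shows "det (congruence_mat n m a b) = (a + b * of_nat c) ^ m * a ^ (n - m)"
proof -
  have mn: "m \<le> n"
    using n c by simp
  define R where "R = mat n n (\<lambda>(i,l). if m \<le> i then (if i = l then a else 0)
       else if l < m then (if i = l then a + b * of_nat c else 0) else (if i = l mod m then b else 0))"
  have carrier: "fold_rows_mat n m s \<in> carrier_mat n n" "congruence_mat n m a b \<in> carrier_mat n n"
    for s :: 'a
    by (simp_all add: fold_rows_mat_def congruence_mat_def)
  have reduced: "fold_rows_mat n m (-1) * congruence_mat n m a b * fold_rows_mat n m 1 = R"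
    unfolding fold_rows_mat_mult_congruence_mat[OF m mn] R_def
    by (rule congruence_mat_reduced_mult_fold_rows_mat[OF assms])
  have "det (congruence_mat n m a b)
      = det (fold_rows_mat n m (-1) * congruence_mat n m a b * fold_rows_mat n m 1)"
    unfolding det_mult[OF mult_carrier_mat[OF carrier(1,2)] carrier(1)] det_mult[OF carrier(1,2)]
    by (metis det_fold_rows_mat[OF m] mult_1 mult_1_right)
  also have "\<dots> = det R"
    using reduced by simp
  also have "\<dots> = (\<Prod>i = 0..<n. if i < m then a + b * of_nat c else a)"
    by (subst det_upper_triangular[of _ n])
       (auto simp: R_def upper_triangular_def prod_list_diag_prod intro!: prod.cong)
  also have "\<dots> = (\<Prod>i = 0..<m. a + b * of_nat c) * (\<Prod>i = m..<n. a)"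
  proof -
    have "(\<Prod>i = 0..<m. if i < m then a + b * of_nat c else a) = (\<Prod>i = 0..<m. a + b * of_nat c)"
      and "(\<Prod>i = m..<n. if i < m then a + b * of_nat c else a) = (\<Prod>i = m..<n. a)"
      by (auto intro: prod.cong)
    with mn show ?thesis
      by (simp add: prod.atLeastLessThan_concat[symmetric, of 0 m n])
  qed
  also have "\<dots> = (a + b * of_nat c) ^ m * a ^ (n - m)"
    by simp
  finally show ?thesis .
qed

text \<open>Right multiplication by \<open>I - J / (n - 1)\<close>, where \<open>J\<close> is the all-ones matrix,
  sends \<open>J - B\<close> to \<open>-B\<close> when all row sums of \<open>B\<close> are \<open>1\<close>.\<close>

lemma det_ones_minus_row_stochastic:
  fixes B :: "'a::field_char_0 mat"
  assumes B: "B \<in> carrier_mat n n" and n: "1 < n"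
    and rows: "\<And>i. i < n \<Longrightarrow> (\<Sum>k = 0..<n. B $$ (i,k)) = 1"
  shows "det (mat n n (\<lambda>(i,j). 1 - B $$ (i,j))) = (-1) ^ Suc n * (of_nat n - 1) * det B"
proof -
  define \<alpha> :: 'a where "\<alpha> = 1 / (of_nat n - 1)"
  have n1: "of_nat n - 1 \<noteq> (0::'a)"
    using n by simp
  define Z where "Z = mat n n (\<lambda>(i,j). 1 - B $$ (i,j))"
  define W where "W = congruence_mat n 1 1 (- \<alpha>)"
  have Z: "Z \<in> carrier_mat n n" and W: "W \<in> carrier_mat n n"
    by (simp_all add: Z_def W_def congruence_mat_def)
  have "det W = 1 - \<alpha> * of_nat n"
    using det_congruence_mat[of 1 n n 1 "- \<alpha>"] n by (simp add: W_def)
  then have det_W: "det W = - \<alpha>"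
    using n1 by (simp add: \<alpha>_def field_simps)
  have "Z * W = (-1) \<cdot>\<^sub>m B"
  proof (rule eq_matI)
    fix i j
    assume "i < dim_row ((-1) \<cdot>\<^sub>m B)" "j < dim_col ((-1) \<cdot>\<^sub>m B)"
    then have i: "i < n" and j: "j < n"
      using B by auto
    have "(Z * W) $$ (i,j) = (\<Sum>k = 0..<n. (1 - B $$ (i,k)) * ((if k = j then 1 else 0) - \<alpha>))"
      using i j by (simp add: Z_def W_def congruence_mat_def mat_mult_mat)
    also have "\<dots> = (\<Sum>k = 0..<n. (if k = j then 1 - B $$ (i,k) else 0) - \<alpha> * (1 - B $$ (i,k)))"
      by (intro sum.cong refl) (simp add: algebra_simps)
    also have "\<dots> = (\<Sum>k = 0..<n. if k = j then 1 - B $$ (i,k) else 0) - \<alpha> * (\<Sum>k = 0..<n. 1 - B $$ (i,k))"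
      by (simp only: sum_subtractf[of "\<lambda>k. if k = j then 1 - B $$ (i,k) else 0"] sum_distrib_left)
    also have "\<dots> = (1 - B $$ (i,j)) - \<alpha> * (of_nat n - 1)"
      using j rows[OF i] by (simp add: sum_subtractf)
    also have "\<dots> = - B $$ (i,j)"
      using n1 by (simp add: \<alpha>_def)
    finally show "(Z * W) $$ (i,j) = ((-1) \<cdot>\<^sub>m B) $$ (i,j)"
      using i j B by simp
  qed (use B in \<open>auto simp: Z_def W_def congruence_mat_def\<close>)
  then have "det Z * (- \<alpha>) = (-1) ^ n * det B"
    using det_mult[OF Z W] det_W B by simp
  then show ?thesis
    using n1 by (simp add: Z_def \<alpha>_def field_simps)
qed

section \<open>The Legendre kernels\<close>

lemma bij_betw_mod_residue_class:
  fixes r m i :: nat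
  assumes cop: "coprime r m" and r: "0 < r" and m: "0 < m"
  shows "bij_betw (\<lambda>k. k mod r) {k \<in> {0..<r * m}. k mod m = i mod m} {0..<r}"
  unfolding bij_betw_def
proof (intro conjI inj_onI equalityI subsetI)
  fix k k'
  assume k: "k \<in> {k \<in> {0..<r * m}. k mod m = i mod m}"
    and k': "k' \<in> {k \<in> {0..<r * m}. k mod m = i mod m}"
    and eq: "k mod r = k' mod r"
  have "[k = k'] (mod r)" "[k = k'] (mod m)"
    using k k' eq by (auto simp: cong_def)
  then have "[k = k'] (mod r * m)"
    using cop coprime_cong_mult_nat by blast
  then show "k = k'"
    using k k' cong_less_modulus_unique_nat by auto
next
  fix a
  assume "a \<in> (\<lambda>k. k mod r) ` {k \<in> {0..<r * m}. k mod m = i mod m}"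
  then show "a \<in> {0..<r}"
    using r by auto
next
  fix a
  assume a: "a \<in> {0..<r}"
  obtain x where x: "[x = a] (mod r)" "[x = i] (mod m)"
    using binary_chinese_remainder_nat[OF cop] by blast
  have "x mod (r * m) mod r = a" and "x mod (r * m) mod m = i mod m" and "x mod (r * m) < r * m"
    using x a r m by (simp_all add: cong_def mod_mod_cancel)
  then show "a \<in> (\<lambda>k. k mod r) ` {k \<in> {0..<r * m}. k mod m = i mod m}"
    by force
qed

lemma sum_residue_class_reindex_mod:
  fixes G :: "nat \<Rightarrow> 'a::comm_monoid_add" and r m i :: nat
  assumes "coprime r m" and "0 < r" and "0 < m"
    and "\<And>k. k < r * m \<Longrightarrow> k mod m = i mod m \<Longrightarrow> G k = F (k mod r)"
  shows "(\<Sum>k = 0..<r * m. if k mod m = i mod m then G k else 0) = (\<Sum>a = 0..<r. F a)"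
proof -
  have "(\<Sum>k = 0..<r * m. if k mod m = i mod m then G k else 0)
      = (\<Sum>k \<in> {k \<in> {0..<r * m}. k mod m = i mod m}. F (k mod r))"
    using assms(4) by (simp add: sum.inter_filter[symmetric])
  also have "\<dots> = (\<Sum>a = 0..<r. F a)"
    by (rule sum.reindex_bij_betw[OF bij_betw_mod_residue_class[OF assms(1-3)]])
  finally show ?thesis .
qed

lemma eq_if_cong_coprime_moduli:
  fixes r m i j :: nat
  assumes "coprime r m" "i < r * m" "j < r * m" "i mod m = j mod m" "[int i = int j] (mod int r)"
  shows "i = j"
proof -
  have "[i = j] (mod r)"
    using assms(5) by (simp add: cong_int_iff)
  moreover have "[i = j] (mod m)"
    using assms(4) by (simp add: cong_def)
  ultimately have "[i = j] (mod r * m)"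
    using assms(1) coprime_cong_mult_nat by blast
  then show ?thesis
    using assms cong_less_modulus_unique_nat by auto
qed

lemma Legendre_diff_mod:
  "Legendre (x - int (k mod r)) (int r) = Legendre (x - int k) (int r)"
  "Legendre (int (k mod r) - x) (int r) = Legendre (int k - x) (int r)"
proof -
  have "[int (k mod r) = int k] (mod int r)"
    unfolding cong_int_iff by (simp add: cong_def)
  then show "Legendre (x - int (k mod r)) (int r) = Legendre (x - int k) (int r)"
    and "Legendre (int (k mod r) - x) (int r) = Legendre (int k - x) (int r)"
    by (auto intro: Legendre_cong cong_diff cong_refl)
qed

definition legendre_kernel :: "nat \<Rightarrow> nat \<Rightarrow> nat \<Rightarrow> nat \<Rightarrow> rat" where
  "legendre_kernel r m i j =
     (if i mod m = j mod m then of_int (Legendre (int i - int j) (int r)) else 0)"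

definition legendre_pencil :: "nat \<Rightarrow> nat \<Rightarrow> rat \<Rightarrow> rat mat" where
  "legendre_pencil r m t =
     mat (r * m) (r * m) (\<lambda>(i,j). (if i = j then 1 else 0) + t * legendre_kernel r m i j)"

lemma legendre_kernel_mult_swap:
  fixes r m i j :: nat
  assumes cop: "coprime r m" and r: "0 < r" and m: "0 < m"
  shows "(\<Sum>k = 0..<r * m. legendre_kernel r m i k * legendre_kernel m r k j) =
    of_int (Legendre (int i - int j) (int r) * Legendre (int i - int j) (int m))"
proof -
  have "(\<Sum>k = 0..<r * m. legendre_kernel r m i k * legendre_kernel m r k j) =
    (\<Sum>k = 0..<r * m. if k mod m = i mod m then
       (if k mod r = j mod r then of_int (Legendre (int i - int k) (int r)
          * Legendre (int k - int j) (int m)) else 0) else 0)"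
    by (intro sum.cong refl) (auto simp: legendre_kernel_def)
  also have "\<dots> = (\<Sum>a = 0..<r. if a = j mod r then of_int (Legendre (int i - int a) (int r)
      * Legendre (int i - int j) (int m)) else 0)"
  proof (rule sum_residue_class_reindex_mod[OF cop r m])
    fix k
    assume "k mod m = i mod m"
    then have m_eq: "Legendre (int k - int j) (int m) = Legendre (int i - int j) (int m)"
      by (intro Legendre_cong cong_diff cong_refl, unfold cong_int_iff) (simp add: cong_def)
    have r_eq: "Legendre (int i - int k) (int r) = Legendre (int i - int j) (int r)"
      if "k mod r = j mod r"
      using that by (intro Legendre_cong cong_diff cong_refl, unfold cong_int_iff) (simp add: cong_def)
    show "(if k mod r = j mod r then of_int (Legendre (int i - int k) (int r)
          * Legendre (int k - int j) (int m)) else 0) =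
      (if k mod r = j mod r then of_int (Legendre (int i - int (k mod r)) (int r)
          * Legendre (int i - int j) (int m)) else (0::rat))"
      using m_eq r_eq by (simp add: Legendre_diff_mod)
  qed
  also have "\<dots> = of_int (Legendre (int i - int (j mod r)) (int r) * Legendre (int i - int j) (int m))"
    using r by simp
  finally show ?thesis
    by (simp add: Legendre_diff_mod)
qed

lemma legendre_pencil_mult_swap:
  assumes cop: "coprime r m" and r: "0 < r" and m: "0 < m" and i: "i < r * m" and j: "j < r * m"
  shows "(legendre_pencil r m c * legendre_pencil m r c) $$ (i,j) =
    (if i = j then 1 else 0) + c * legendre_kernel r m i j + c * legendre_kernel m r i j
      + c^2 * of_int (Legendre (int i - int j) (int r) * Legendre (int i - int j) (int m))"
proof -
  let ?X = "legendre_kernel r m" and ?Y = "legendre_kernel m r"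
  have "(legendre_pencil r m c * legendre_pencil m r c) $$ (i,j) =
      (\<Sum>k = 0..<r * m. ((if i = k then 1 else 0) + c * ?X i k) * ((if k = j then 1 else 0) + c * ?Y k j))"
    using i j by (simp add: legendre_pencil_def mult.commute[of m r] mat_mult_mat)
  also have "\<dots> = (\<Sum>k = 0..<r * m. (if k = i then (if k = j then 1 else 0) + c * ?Y k j else 0)
      + (if k = j then c * ?X i k else 0) + c^2 * (?X i k * ?Y k j))"
    by (intro sum.cong refl) (auto simp: algebra_simps power2_eq_square)
  also have "\<dots> = ((if i = j then 1 else 0) + c * ?Y i j) + c * ?X i j
      + c^2 * (\<Sum>k = 0..<r * m. ?X i k * ?Y k j)"
    using i j by (simp add: sum.distrib sum_distrib_left)
  also have "(\<Sum>k = 0..<r * m. ?X i k * ?Y k j)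
      = of_int (Legendre (int i - int j) (int r) * Legendre (int i - int j) (int m))"
    by (rule legendre_kernel_mult_swap[OF cop r m])
  finally show ?thesis
    by (simp add: algebra_simps)
qed

lemma mult_mod_permutes:
  fixes \<nu> n :: nat
  assumes "coprime \<nu> n"
  shows "(\<lambda>i. if i < n then \<nu> * i mod n else i) permutes {0..<n}"
    (is "?\<sigma> permutes _")
proof (cases "n = 0")
  case False
  have inj: "inj_on ?\<sigma> {0..<n}"
  proof
    fix i j
    assume ij: "i \<in> {0..<n}" "j \<in> {0..<n}" "?\<sigma> i = ?\<sigma> j"
    then have "[\<nu> * i = \<nu> * j] (mod n)"
      by (simp add: cong_def)
    then have "[i = j] (mod n)"
      using assms by (simp add: cong_mult_lcancel_nat coprime_commute)
    then show "i = j"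
      using ij cong_less_modulus_unique_nat by auto
  qed
  moreover have "?\<sigma> ` {0..<n} = {0..<n}"
  proof (rule card_subset_eq)
    show "card (?\<sigma> ` {0..<n}) = card {0..<n}"
      using inj by (rule card_image)
    show "?\<sigma> ` {0..<n} \<subseteq> {0..<n}"
      using False by auto
  qed simp
  ultimately show ?thesis
    by (intro bij_imp_permutes) (auto simp: bij_betw_def)
qed (simp add: permutes_id[unfolded id_def])

context
  fixes r m :: nat
  assumes r: "prime r" "2 < r" and m: "0 < m" and cop: "coprime r m"
begin

lemma legendre_kernel_square:
  assumes i: "i < r * m" and j: "j < r * m"
  shows "(\<Sum>k = 0..<r * m. legendre_kernel r m i k * legendre_kernel r m k j) =
    of_int (Legendre (-1) (int r))
      * ((if i = j then of_nat r else 0) - (if i mod m = j mod m then 1 else 0))"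
proof (cases "i mod m = j mod m")
  case False
  then have "(\<Sum>k = 0..<r * m. legendre_kernel r m i k * legendre_kernel r m k j) = 0"
    by (intro sum.neutral ballI) (auto simp: legendre_kernel_def)
  with False show ?thesis
    by auto
next
  case True
  have r_pos: "0 < r"
    using r by simp
  have "(\<Sum>k = 0..<r * m. legendre_kernel r m i k * legendre_kernel r m k j) =
     (\<Sum>k = 0..<r * m. if k mod m = i mod m then
        of_int (Legendre (int i - int k) (int r) * Legendre (int k - int j) (int r)) else 0)"
    using True by (intro sum.cong refl) (auto simp: legendre_kernel_def)
  also have "\<dots> = (\<Sum>a = 0..<r. of_int (Legendre (int i - int a) (int r) * Legendre (int a - int j) (int r)))"
    by (rule sum_residue_class_reindex_mod[OF cop r_pos m]) (simp add: Legendre_diff_mod)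
  also have "\<dots> = of_int (\<Sum>a<r. Legendre (int i - int a) (int r) * Legendre (int a - int j) (int r))"
    by (simp add: atLeast0LessThan)
  also have "\<dots> = of_int (Legendre (-1) (int r) * (if [int i = int j] (mod int r) then int r - 1 else - 1))"
    using Legendre_correlation[OF r] by simp
  also have "[int i = int j] (mod int r) \<longleftrightarrow> i = j"
    using eq_if_cong_coprime_moduli[OF cop i j True] by auto
  finally show ?thesis
    using True by (simp add: of_nat_diff algebra_simps)
qed

lemma legendre_kernel_row_sum:
  assumes "i < r * m"
  shows "(\<Sum>k = 0..<r * m. legendre_kernel r m i k) = 0"
proof -
  have r_pos: "0 < r"
    using r by simp
  have "(\<Sum>k = 0..<r * m. legendre_kernel r m i k) =
     (\<Sum>k = 0..<r * m. if k mod m = i mod m then of_int (Legendre (int i - int k) (int r)) else 0)"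
    by (intro sum.cong refl) (auto simp: legendre_kernel_def)
  also have "\<dots> = (\<Sum>a = 0..<r. of_int (Legendre (int i - int a) (int r)))"
    by (rule sum_residue_class_reindex_mod[OF cop r_pos m]) (simp add: Legendre_diff_mod)
  also have "\<dots> = of_int (\<Sum>a<r. Legendre (-1) (int r) * Legendre (int a + (- int i)) (int r))"
  proof -
    have "Legendre (int i - int a) (int r) = Legendre (-1) (int r) * Legendre (int a - int i) (int r)" for a
      using Legendre_mult[OF r, of "-1" "int a - int i"] by simp
    then show ?thesis
      by (simp add: atLeast0LessThan)
  qed
  also have "\<dots> = 0"
    using Legendre_sum_shift[OF r, of "- int i"]
    by (simp add: sum_distrib_left[symmetric] of_int_sum[symmetric] del: of_int_sum)
  finally show ?thesis .
qed

lemma legendre_kernel_mult_nonresidue: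
  assumes \<nu>: "Legendre (int \<nu>) (int r) = -1" "[\<nu> = 1] (mod m)"
    and ij: "i < r * m" "j < r * m"
  shows "legendre_kernel r m (\<nu> * i mod (r * m)) (\<nu> * j mod (r * m)) = - legendre_kernel r m i j"
proof -
  have mod_m: "[\<nu> * k mod (r * m) = k] (mod m)" for k
  proof -
    have "[\<nu> * k mod (r * m) = \<nu> * k] (mod m)"
      by (simp add: cong_def mod_mod_cancel)
    also have "[\<nu> * k = 1 * k] (mod m)"
      using \<nu>(2) by (intro cong_mult cong_refl)
    finally show ?thesis
      by simp
  qed
  have mod_r: "[int (\<nu> * k mod (r * m)) = int \<nu> * int k] (mod int r)" for k
  proof -
    have "[\<nu> * k mod (r * m) = \<nu> * k] (mod r)"
      by (simp add: cong_def mod_mod_cancel)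
    then show ?thesis
      by (simp add: cong_int_iff flip: of_nat_mult)
  qed
  have "[int (\<nu> * i mod (r * m)) - int (\<nu> * j mod (r * m)) = int \<nu> * (int i - int j)] (mod int r)"
    using cong_diff[OF mod_r mod_r] by (simp add: right_diff_distrib)
  then have "Legendre (int (\<nu> * i mod (r * m)) - int (\<nu> * j mod (r * m))) (int r)
      = Legendre (int \<nu> * (int i - int j)) (int r)"
    by (rule Legendre_cong)
  also have "\<dots> = - Legendre (int i - int j) (int r)"
    using Legendre_mult[OF r] \<nu>(1) by simp
  finally show ?thesis
    using mod_m[of i] mod_m[of j] by (simp add: legendre_kernel_def cong_def)
qed

lemma legendre_kernel_sign_flip:
  obtains \<sigma> where "\<sigma> permutes {0..<r * m}"
    and "\<And>i j. i < r * m \<Longrightarrow> j < r * m \<Longrightarrow>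
           legendre_kernel r m (\<sigma> i) (\<sigma> j) = - legendre_kernel r m i j"
proof -
  obtain g where g: "Legendre (int g) (int r) = -1"
    using Legendre_nonresidue_exists r by blast
  obtain \<nu> where \<nu>: "[\<nu> = g] (mod r)" "[\<nu> = 1] (mod m)"
    using binary_chinese_remainder_nat[OF cop] by blast
  have nonresidue: "Legendre (int \<nu>) (int r) = -1"
    using Legendre_cong_nat[OF \<nu>(1)] g by simp
  then have "\<not> r dvd \<nu>"
    by (auto simp flip: Legendre_eq_0_iff_dvd)
  then have "coprime \<nu> r"
    using r(1) by (metis prime_imp_coprime coprime_commute)
  moreover have "coprime \<nu> m"
    using \<nu>(2) by (metis cong_imp_coprime cong_sym coprime_1_left)
  ultimately have "(\<lambda>i. if i < r * m then \<nu> * i mod (r * m) else i) permutes {0..<r * m}"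
    by (intro mult_mod_permutes) simp
  with that show ?thesis
    using legendre_kernel_mult_nonresidue[OF nonresidue \<nu>(2)] by simp
qed

lemma legendre_pencil_row_sum:
  assumes "i < r * m"
  shows "(\<Sum>k = 0..<r * m. legendre_pencil r m t $$ (i,k)) = 1"
  using legendre_kernel_row_sum[OF assms] assms
  by (simp add: legendre_pencil_def sum.distrib sum_distrib_left[symmetric])

lemma det_legendre_pencil_neg: "det (legendre_pencil r m (-t)) = det (legendre_pencil r m t)"
proof -
  obtain \<sigma> where \<sigma>: "\<sigma> permutes {0..<r * m}"
    and flip: "\<And>i j. i < r * m \<Longrightarrow> j < r * m \<Longrightarrow>
                 legendre_kernel r m (\<sigma> i) (\<sigma> j) = - legendre_kernel r m i j"
    by (metis legendre_kernel_sign_flip)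
  have "det (legendre_pencil r m t) = det (mat (r * m) (r * m)
      (\<lambda>(i,j). (\<lambda>i j. (if i = j then 1 else 0) + t * legendre_kernel r m i j) (\<sigma> i) (\<sigma> j)))"
    unfolding legendre_pencil_def by (rule det_mat_permute_rows_cols[OF \<sigma>, symmetric])
  also have "mat (r * m) (r * m)
      (\<lambda>(i,j). (\<lambda>i j. (if i = j then 1 else 0) + t * legendre_kernel r m i j) (\<sigma> i) (\<sigma> j))
      = legendre_pencil r m (-t)"
    by (rule eq_matI) (auto simp: legendre_pencil_def flip inj_eq[OF permutes_inj[OF \<sigma>]])
  finally show ?thesis
    by simp
qed

lemma legendre_pencil_mult_neg:
  "legendre_pencil r m t * legendre_pencil r m (-t) =
     congruence_mat (r * m) m (1 - t^2 * of_int (Legendre (-1) (int r)) * of_nat r)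
       (t^2 * of_int (Legendre (-1) (int r)))"
    (is "_ = congruence_mat _ _ (1 - t^2 * ?s * _) _")
proof (rule eq_matI)
  fix i j
  assume "i < dim_row (congruence_mat (r * m) m (1 - t^2 * ?s * of_nat r) (t^2 * ?s))"
    "j < dim_col (congruence_mat (r * m) m (1 - t^2 * ?s * of_nat r) (t^2 * ?s))"
  then have i: "i < r * m" and j: "j < r * m"
    by (auto simp: congruence_mat_def)
  let ?X = "legendre_kernel r m"
  have "(legendre_pencil r m t * legendre_pencil r m (-t)) $$ (i,j) =
    (\<Sum>k = 0..<r * m. ((if i = k then 1 else 0) + t * ?X i k) * ((if k = j then 1 else 0) - t * ?X k j))"
    using i j by (simp add: legendre_pencil_def mat_mult_mat)
  also have "\<dots> = (\<Sum>k = 0..<r * m. (if k = i then (if k = j then 1 else 0) - t * ?X k j else 0)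
      + (if k = j then t * ?X i k else 0) - t^2 * (?X i k * ?X k j))"
    by (intro sum.cong refl) (auto simp: algebra_simps power2_eq_square)
  also have "\<dots> = ((if i = j then 1 else 0) - t * ?X i j) + t * ?X i j
      - t^2 * (\<Sum>k = 0..<r * m. ?X i k * ?X k j)"
    using i j by (simp add: sum.distrib sum_subtractf sum_distrib_left)
  also have "\<dots> = ((if i = j then 1 else 0) - t * ?X i j) + t * ?X i j
      - t^2 * (?s * ((if i = j then of_nat r else 0) - (if i mod m = j mod m then 1 else 0)))"
    using legendre_kernel_square[OF i j] by simp
  also have "\<dots> = congruence_mat (r * m) m (1 - t^2 * ?s * of_nat r) (t^2 * ?s) $$ (i,j)"
    using i j by (auto simp: congruence_mat_def algebra_simps)
  finally show "(legendre_pencil r m t * legendre_pencil r m (-t)) $$ (i,j) =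
    congruence_mat (r * m) m (1 - t^2 * ?s * of_nat r) (t^2 * ?s) $$ (i,j)" .
qed (auto simp: legendre_pencil_def congruence_mat_def)

lemma det_legendre_pencil_square:
  "det (legendre_pencil r m t) ^ 2 =
     ((1 - of_int (Legendre (-1) (int r)) * of_nat r * t^2) ^ ((r * m - m) div 2)) ^ 2"
proof -
  define s :: rat where "s = of_int (Legendre (-1) (int r))"
  define k where "k = (r * m - m) div 2"
  have "r * m - m = (r - 1) * m"
    by (simp add: diff_mult_distrib)
  moreover have "even (r - 1)"
    using r prime_odd_nat by simp
  ultimately have even: "r * m - m = 2 * k"
    by (simp add: k_def)
  have carrier: "legendre_pencil r m t \<in> carrier_mat (r * m) (r * m)" for t
    by (simp add: legendre_pencil_def)
  have "det (legendre_pencil r m t) ^ 2 = det (legendre_pencil r m t) * det (legendre_pencil r m (-t))"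
    by (simp add: det_legendre_pencil_neg power2_eq_square)
  also have "\<dots> = (1 - t^2 * s * of_nat r + t^2 * s * of_nat r) ^ m * (1 - t^2 * s * of_nat r) ^ (r * m - m)"
    using r m by (simp add: det_mult[OF carrier carrier, symmetric] legendre_pencil_mult_neg
        det_congruence_mat s_def)
  also have "\<dots> = (1 - s * of_nat r * t^2) ^ (2 * k)"
    unfolding even by (simp add: algebra_simps)
  finally show ?thesis
    by (simp add: s_def k_def power_mult[symmetric] mult.commute)
qed

text \<open>The determinant is a polynomial in \<open>t\<close> that is even and whose values satisfy
  \<open>D(t) D(-t) = (1 - \<chi>(-1) r t\<^sup>2)\<^bsup>rm - m\<^esup>\<close>; its square therefore agrees with that of the
  claimed polynomial, and the two agree at \<open>t = 0\<close>.\<close>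

lemma det_legendre_pencil:
  "det (legendre_pencil r m t) =
     (1 - of_int (Legendre (-1) (int r)) * of_nat r * t^2) ^ ((r * m - m) div 2)"
proof -
  define s :: rat where "s = of_int (Legendre (-1) (int r))"
  define k where "k = (r * m - m) div 2"
  obtain F where F: "\<And>t. det (legendre_pencil r m t) = poly F t"
    using det_one_plus_scaled_is_poly[of "r * m" "legendre_kernel r m"]
    unfolding legendre_pencil_def by blast
  define H where "H = [:1, 0, - s * of_nat r:] ^ k"
  have H: "poly H t = (1 - s * of_nat r * t^2) ^ k" for t
    by (simp add: H_def algebra_simps power2_eq_square)
  have "F = H"
  proof (rule poly_eq_if_squares_eq)
    show "poly F t ^ 2 = poly H t ^ 2" for t
      using det_legendre_pencil_square[of t] F H by (simp add: s_def k_def)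
    have "legendre_pencil r m 0 = 1\<^sub>m (r * m)"
      by (rule eq_matI) (auto simp: legendre_pencil_def)
    then show "poly F 0 = poly H 0"
      using F[of 0] H[of 0] by simp
  qed (simp add: H)
  then show ?thesis
    using F H by (simp add: s_def k_def)
qed

end

section \<open>Whiteman's classes via Legendre symbols\<close>

lemma wm_x_cong:
  assumes "coprime p q" and "0 < p * q"
  shows "wm_x p q g < p * q" "[wm_x p q g = g] (mod p)" "[wm_x p q g = 1] (mod q)"
proof -
  obtain y where y: "[y = g] (mod p)" "[y = 1] (mod q)"
    using binary_chinese_remainder_nat[OF assms(1)] by blast
  have "y mod (p * q) < p * q \<and> [y mod (p * q) = g] (mod p) \<and> [y mod (p * q) = 1] (mod q)"
    using y assms(2) by (simp add: cong_def mod_mod_cancel)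
  moreover have "x = x'"
    if "x < p * q \<and> [x = g] (mod p) \<and> [x = 1] (mod q)"
      and "x' < p * q \<and> [x' = g] (mod p) \<and> [x' = 1] (mod q)" for x x'
  proof -
    have "[x = x'] (mod p)" "[x = x'] (mod q)"
      using that by (meson cong_sym cong_trans)+
    then have "[x = x'] (mod p * q)"
      using assms(1) coprime_cong_mult_nat by blast
    then show ?thesis
      using that cong_less_modulus_unique_nat by blast
  qed
  ultimately have "\<exists>!x. x < p * q \<and> [x = g] (mod p) \<and> [x = 1] (mod q)"
    by blast
  from theI'[OF this] show "wm_x p q g < p * q" "[wm_x p q g = g] (mod p)" "[wm_x p q g = 1] (mod q)"
    unfolding wm_x_def by simp_all
qed

lemma chinese_remainder_gcd_2:
  fixes P Q :: nat and A B :: int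
  assumes gcd: "gcd P Q = 2" and even: "even (A - B)" and "0 < P" "0 < Q"
  obtains s where "s < P * Q div 2" "[int s = A] (mod int P)" "[int s = B] (mod int Q)"
proof -
  obtain u v where "u * int P + v * int Q = gcd (int P) (int Q)"
    using bezout_int by blast
  then have uv: "u * int P + v * int Q = 2"
    using gcd by (simp add: gcd_int_def)
  obtain d where d: "A - B = 2 * d"
    using even by blast
  define s0 where "s0 = A - d * u * int P"
  have s0A: "[s0 = A] (mod int P)"
    unfolding s0_def by (simp add: cong_iff_dvd_diff)
  have "s0 - B = d * v * int Q"
    using d uv unfolding s0_def by (simp add: algebra_simps)
      (metis add_diff_cancel_left' distrib_left mult_2 uv mult.commute mult.left_commute)
  then have s0B: "[s0 = B] (mod int Q)"
    by (simp add: cong_iff_dvd_diff)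
  obtain P2 Q2 where P2: "P = 2 * P2" and Q2: "Q = 2 * Q2"
    using gcd by (metis dvd_refl gcd_dvd1 gcd_dvd2 dvdE)
  define L where "L = P * Q div 2"
  have L1: "L = P * Q2" and L2: "L = P2 * Q"
    using P2 Q2 by (simp_all add: L_def)
  have L_pos: "0 < L"
    using assms(3,4) Q2 L1 by simp
  define s where "s = nat (s0 mod int L)"
  have s: "int s = s0 mod int L"
    using L_pos by (simp add: s_def)
  then have "[int s = s0] (mod int L)"
    by (simp add: cong_def)
  moreover have "int P dvd int L"
    unfolding L1 by simp
  moreover have "int Q dvd int L"
    unfolding L2 by simp
  ultimately have "[int s = s0] (mod int P)" "[int s = s0] (mod int Q)"
    using cong_dvd_modulus by blast+
  then have "[int s = A] (mod int P)" "[int s = B] (mod int Q)"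
    using s0A s0B cong_trans by blast+
  moreover have "s < L"
    using s L_pos by (metis of_nat_less_iff pos_mod_bound of_nat_0_less_iff)
  ultimately show ?thesis
    using that unfolding L_def by blast
qed

lemma circulant_index:
  fixes N r i j :: nat
  assumes N: "0 < N" and i: "i < N" and j: "j < N"
  defines "t \<equiv> nat ((int i - int j) mod int N)"
  shows "t < N" and "t = 0 \<longleftrightarrow> i = j"
    and "r dvd N \<Longrightarrow> r dvd t \<longleftrightarrow> i mod r = j mod r"
    and "r dvd N \<Longrightarrow> Legendre (int t) (int r) = Legendre (int i - int j) (int r)"
proof -
  have t: "int t = (int i - int j) mod int N"
    using N by (simp add: t_def)
  then show "t < N"
    using N by (metis of_nat_less_iff pos_mod_bound of_nat_0_less_iff)
  have "t = 0 \<longleftrightarrow> int t = 0"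
    by simp
  also have "\<dots> \<longleftrightarrow> int N dvd (int i - int j)"
    unfolding t by (simp add: dvd_eq_mod_eq_0)
  also have "\<dots> \<longleftrightarrow> [i = j] (mod N)"
    by (simp add: cong_iff_dvd_diff flip: cong_int_iff)
  also have "\<dots> \<longleftrightarrow> i = j"
    using i j cong_less_modulus_unique_nat by (auto simp: cong_refl)
  finally show "t = 0 \<longleftrightarrow> i = j" .
  assume "r dvd N"
  moreover have "[int t = int i - int j] (mod int N)"
    using t by (simp add: cong_def)
  ultimately have r: "[int t = int i - int j] (mod int r)"
    by (meson cong_dvd_modulus of_nat_dvd_iff)
  then show "Legendre (int t) (int r) = Legendre (int i - int j) (int r)"
    by (rule Legendre_cong)
  have "r dvd t \<longleftrightarrow> [int t = 0] (mod int r)"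
    by (simp add: cong_0_iff)
  also have "\<dots> \<longleftrightarrow> [int i - int j = 0] (mod int r)"
    using r by (meson cong_sym cong_trans)
  also have "\<dots> \<longleftrightarrow> [i = j] (mod r)"
    by (simp add: cong_0_iff cong_iff_dvd_diff flip: cong_int_iff)
  finally show "r dvd t \<longleftrightarrow> i mod r = j mod r"
    by (simp add: cong_def)
qed

lemma mem_cyc_D1_iff:
  assumes r: "prime r" "2 < r" and g: "residue_primroot r g"
  shows "y \<in> cyc_D r g 1 \<longleftrightarrow> y < r \<and> Legendre (int y) (int r) = -1"
proof
  assume "y \<in> cyc_D r g 1"
  then obtain k where y: "y = g ^ (2 * k + 1) mod r"
    unfolding cyc_D_def by blast
  then have "Legendre (int y) (int r) = Legendre (int (g ^ (2 * k + 1))) (int r)"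
    by (intro Legendre_cong, unfold cong_int_iff) (simp add: cong_def)
  with r y show "y < r \<and> Legendre (int y) (int r) = -1"
    by (simp add: Legendre_primroot_power[OF r g] prime_gt_0_nat del: power_Suc)
next
  assume y: "y < r \<and> Legendre (int y) (int r) = -1"
  then have "\<not> r dvd y"
    by (auto simp flip: Legendre_eq_0_iff_dvd)
  then obtain a where a: "a < r - 1" "[g ^ a = y] (mod r)"
    using primroot_discrete_log[OF r(1) g] by blast
  then have "Legendre (int y) (int r) = Legendre (int g ^ a) (int r)"
    by (intro Legendre_cong) (simp add: cong_sym_eq cong_int_iff flip: of_nat_power)
  then have "odd a"
    using y Legendre_primroot_power[OF r g, of a] by (auto simp: minus_one_power_iff)
  then obtain k where "a = 2 * k + 1"
    by (auto elim: oddE)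
  with a y show "y \<in> cyc_D r g 1"
    unfolding cyc_D_def by (auto simp: cong_def intro!: exI[of _ k])
qed

lemma mem_scaled_cyc_D1_iff:
  assumes r: "prime r" "2 < r" and g: "residue_primroot r g"
    and rm: "\<not> r dvd m" and t: "t < r * m"
  shows "t \<in> {(y * m) mod (r * m) | y. y \<in> cyc_D r g 1} \<longleftrightarrow>
    m dvd t \<and> Legendre (int m) (int r) * Legendre (int t) (int r) = -1"
proof -
  have m_sq: "Legendre (int m) (int r) * Legendre (int m) (int r) = 1"
    using rm by (intro Legendre_square_eq_1) (simp add: cong_0_iff)
  have key: "Legendre (int m) (int r) * Legendre (int (y * m)) (int r) = Legendre (int y) (int r)" for y
  proof -
    have "Legendre (int m) (int r) * Legendre (int (y * m)) (int r)
        = Legendre (int y) (int r) * (Legendre (int m) (int r) * Legendre (int m) (int r))"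
      using Legendre_mult[OF r, of "int y" "int m"] by (simp add: ac_simps)
    with m_sq show ?thesis
      by simp
  qed
  have "0 < m"
    using rm by (rule contrapos_np) simp
  then have small: "(y * m) mod (r * m) = y * m" if "y \<in> cyc_D r g 1" for y
    using that mem_cyc_D1_iff[OF r g] by simp
  have "{(y * m) mod (r * m) | y. y \<in> cyc_D r g 1} = (\<lambda>y. y * m) ` cyc_D r g 1"
    unfolding Setcompr_eq_image using small by (rule image_cong[OF refl])
  then have "t \<in> {(y * m) mod (r * m) | y. y \<in> cyc_D r g 1} \<longleftrightarrow> (\<exists>y. t = y * m \<and> y \<in> cyc_D r g 1)"
    by auto
  also have "\<dots> \<longleftrightarrow> (\<exists>y. t = y * m \<and> y < r \<and> Legendre (int y) (int r) = -1)"
    using mem_cyc_D1_iff[OF r g] by blast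
  also have "\<dots> \<longleftrightarrow> m dvd t \<and> Legendre (int m) (int r) * Legendre (int t) (int r) = -1"
  proof
    assume "\<exists>y. t = y * m \<and> y < r \<and> Legendre (int y) (int r) = -1"
    then obtain y where "t = y * m" "Legendre (int y) (int r) = -1"
      by blast
    then show "m dvd t \<and> Legendre (int m) (int r) * Legendre (int t) (int r) = -1"
      using key[of y] by simp
  next
    assume H: "m dvd t \<and> Legendre (int m) (int r) * Legendre (int t) (int r) = -1"
    then obtain y where y: "t = y * m"
      by (metis dvdE mult.commute)
    moreover have "y < r"
      using t y \<open>0 < m\<close> by simp
    ultimately show "\<exists>y. t = y * m \<and> y < r \<and> Legendre (int y) (int r) = -1"
      using H key[of y] by auto
  qed
  finally show ?thesis .
qed

lemma odd_prime_gt_2: "prime (p::nat) \<Longrightarrow> odd p \<Longrightarrow> 2 < p"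
  by (metis le_neq_implies_less prime_ge_2_nat even_numeral)

lemma Legendre_swap_if_mod_4_eq_1:
  assumes p: "prime p" "2 < p" and q: "prime q" "2 < q" and pq: "p \<noteq> q"
    and p4: "p mod 4 = 1"
  shows "Legendre (int p) (int q) = Legendre (int q) (int p)"
proof -
  have "even ((p - 1) div 2)"
    using p4 by presburger
  then have "Legendre (int p) (int q) * Legendre (int q) (int p) = 1"
    using Quadratic_Reciprocity[OF p q pq] by simp
  moreover have "\<not> [int q = 0] (mod int p)" and "\<not> [int p = 0] (mod int q)"
    using p q pq primes_dvd_imp_eq by (auto simp: cong_0_iff)
  ultimately show ?thesis
    using Legendre_unit_values by fastforce
qed

context
  fixes p q g :: nat
  assumes p: "prime p" "2 < p" and q: "prime q" "2 < q" and pq: "p \<noteq> q"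
    and gcd: "gcd (p - 1) (q - 1) = 2"
    and gp: "residue_primroot p g" and gq: "residue_primroot q g"
begin

lemma mem_wm_D1_if_cong:
  assumes t: "t < p * q" and s: "s < wm_e p q"
    and tp: "[g ^ (s + 1) = t] (mod p)" and tq: "[g ^ s = t] (mod q)"
  shows "t \<in> wm_D p q g 1"
proof -
  have cop: "coprime p q"
    using p q pq by (simp add: primes_coprime)
  note x = wm_x_cong[OF cop, of g]
  have "[g ^ s * wm_x p q g = g ^ s * g] (mod p)"
    using x p q by (intro cong_mult cong_refl) auto
  then have "[g ^ s * wm_x p q g = t] (mod p)"
    using tp by (simp add: mult.commute cong_trans)
  moreover have "[g ^ s * wm_x p q g = g ^ s * 1] (mod q)"
    using x p q by (intro cong_mult cong_refl) auto
  then have "[g ^ s * wm_x p q g = t] (mod q)"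
    using tq by (simp add: cong_trans)
  ultimately have "[g ^ s * wm_x p q g = t] (mod p * q)"
    using cop by (simp add: coprime_cong_mult_nat)
  then have "t = (g ^ s * wm_x p q g ^ 1) mod (p * q)"
    using t by (simp add: cong_def)
  with s show ?thesis
    unfolding wm_D_def by blast
qed

lemma primroot_power_cong_iff:
  assumes "prime r" "residue_primroot r g"
  shows "[g ^ a = g ^ b] (mod r) \<longleftrightarrow> [a = b] (mod (r - 1))"
  using assms order_divides_expdiff[of r g a b]
  by (simp add: residue_primroot_def totient_prime coprime_commute)

lemma Legendre_mult_eq_minus_1_if_mem_wm_D1:
  assumes "t \<in> wm_D p q g 1"
  shows "Legendre (int t) (int p) * Legendre (int t) (int q) = -1"
proof -
  have cop: "coprime p q"
    using p q pq by (simp add: primes_coprime)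
  note x = wm_x_cong[OF cop, of g]
  obtain s where s: "t = (g ^ s * wm_x p q g) mod (p * q)"
    using assms unfolding wm_D_def by auto
  have "[t = g ^ s * wm_x p q g] (mod p)"
    using s by (simp add: cong_def mod_mod_cancel)
  also have "[g ^ s * wm_x p q g = g ^ s * g] (mod p)"
    using x p q by (intro cong_mult cong_refl) auto
  finally have tp: "[t = g ^ (s + 1)] (mod p)"
    by (simp add: mult.commute)
  have "[t = g ^ s * wm_x p q g] (mod q)"
    using s by (simp add: cong_def mod_mod_cancel)
  also have "[g ^ s * wm_x p q g = g ^ s * 1] (mod q)"
    using x p q by (intro cong_mult cong_refl) auto
  finally have tq: "[t = g ^ s] (mod q)"
    by simp
  have "Legendre (int t) (int p) = (-1) ^ (s + 1)"
    using Legendre_cong_nat[OF tp] Legendre_primroot_power[OF p gp] by (simp only: of_nat_power)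
  moreover have "Legendre (int t) (int q) = (-1) ^ s"
    using Legendre_cong_nat[OF tq] Legendre_primroot_power[OF q gq] by (simp only: of_nat_power)
  ultimately show ?thesis
    by (auto simp: power_add)
qed

lemma mem_wm_D1_iff:
  assumes t: "t < p * q"
  shows "t \<in> wm_D p q g 1 \<longleftrightarrow> Legendre (int t) (int p) * Legendre (int t) (int q) = -1"
proof
  show "t \<in> wm_D p q g 1 \<Longrightarrow> Legendre (int t) (int p) * Legendre (int t) (int q) = -1"
    by (rule Legendre_mult_eq_minus_1_if_mem_wm_D1)
next
  assume H: "Legendre (int t) (int p) * Legendre (int t) (int q) = -1"
  then have "\<not> p dvd t" "\<not> q dvd t"
    by (auto simp flip: Legendre_eq_0_iff_dvd)
  obtain a where a: "a < p - 1" "[g ^ a = t] (mod p)"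
    using primroot_discrete_log[OF p(1) gp \<open>\<not> p dvd t\<close>] by blast
  obtain b where b: "b < q - 1" "[g ^ b = t] (mod q)"
    using primroot_discrete_log[OF q(1) gq \<open>\<not> q dvd t\<close>] by blast
  have "Legendre (int t) (int p) = (-1) ^ a" and "Legendre (int t) (int q) = (-1) ^ b"
    using Legendre_cong_nat[OF a(2)] Legendre_cong_nat[OF b(2)]
      Legendre_primroot_power[OF p gp] Legendre_primroot_power[OF q gq] by simp_all
  with H have "odd (a + b)"
    by (auto simp: power_add minus_one_power_iff split: if_splits)
  then have "even ((int a - 1) - int b)"
    by auto
  then obtain s where s: "s < (p - 1) * (q - 1) div 2"
      "[int s = int a - 1] (mod int (p - 1))" "[int s = int b] (mod int (q - 1))"
    by (rule chinese_remainder_gcd_2[OF gcd]) (use p q in auto)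
  have "[int (s + 1) = int a] (mod int (p - 1))"
    using s(2) by (simp add: cong_iff_dvd_diff algebra_simps)
  then have "[s + 1 = a] (mod (p - 1))"
    by (simp only: cong_int_iff)
  then have "[g ^ (s + 1) = t] (mod p)"
    using a(2) primroot_power_cong_iff[OF p(1) gp] cong_trans by blast
  moreover have "[s = b] (mod (q - 1))"
    using s(3) by (simp only: cong_int_iff)
  then have "[g ^ s = t] (mod q)"
    using b(2) primroot_power_cong_iff[OF q(1) gq] cong_trans by blast
  ultimately show "t \<in> wm_D p q g 1"
    using mem_wm_D1_if_cong t s(1) by (simp add: wm_e_def)
qed

lemma mem_wm_C1_iff:
  assumes t: "t < p * q"
  shows "t \<in> wm_C1 p q g \<longleftrightarrow>
     Legendre (int t) (int p) * Legendre (int t) (int q) = -1 \<or>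
     (q dvd t \<and> Legendre (int q) (int p) * Legendre (int t) (int p) = -1) \<or>
     (p dvd t \<and> Legendre (int p) (int q) * Legendre (int t) (int q) = -1)"
proof -
  have "\<not> p dvd q" "\<not> q dvd p"
    using p q pq primes_dvd_imp_eq by auto
  then have "t \<in> {(y * q) mod (p * q) | y. y \<in> cyc_D p g 1} \<longleftrightarrow>
      q dvd t \<and> Legendre (int q) (int p) * Legendre (int t) (int p) = -1"
    and "t \<in> {(y * p) mod (p * q) | y. y \<in> cyc_D q g 1} \<longleftrightarrow>
      p dvd t \<and> Legendre (int p) (int q) * Legendre (int t) (int q) = -1"
    using mem_scaled_cyc_D1_iff[OF p gp, of q t] mem_scaled_cyc_D1_iff[OF q gq, of p t] t
    by (simp_all add: mult.commute)
  then show ?thesis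
    unfolding wm_C1_def using mem_wm_D1_iff[OF t] by blast
qed

end

section \<open>The circulant matrix\<close>

context
  fixes p q g :: nat
  assumes p: "prime p" "2 < p" and q: "prime q" "2 < q" and pq: "p \<noteq> q"
    and p4: "p mod 4 = 1" and q4: "q mod 4 = 3" and gcd: "gcd (p - 1) (q - 1) = 2"
    and gp: "residue_primroot p g" and gq: "residue_primroot q g"
begin

lemma p_not_dvd_q: "\<not> p dvd q"
  using p q pq primes_dvd_imp_eq by auto

lemma wm_seq_Legendre:
  assumes t: "t < p * q"
  shows "(if t \<in> wm_C1 p q g then (1::rat) else 0) =
    (1 - ((if t = 0 then 1 else 0)
       + of_int (Legendre (int q) (int p)) * (if q dvd t then of_int (Legendre (int t) (int p)) else 0)
       + of_int (Legendre (int q) (int p)) * (if p dvd t then of_int (Legendre (int t) (int q)) else 0)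
       + of_int (Legendre (int t) (int p)) * of_int (Legendre (int t) (int q)))) / 2"
proof -
  note C1 = mem_wm_C1_iff[OF p q pq gcd gp gq t]
  have swap: "Legendre (int p) (int q) = Legendre (int q) (int p)"
    by (rule Legendre_swap_if_mod_4_eq_1[OF p q pq p4])
  note c = Legendre_unit_values_nat[OF p_not_dvd_q]
  consider "p dvd t" "q dvd t" | "p dvd t" "\<not> q dvd t" | "\<not> p dvd t" "q dvd t" | "\<not> p dvd t" "\<not> q dvd t"
    by blast
  then show ?thesis
  proof cases
    case 1
    then have "p * q dvd t"
      using p q pq by (simp add: primes_coprime divides_mult)
    with t have "t = 0"
      by (metis dvd_imp_le le_antisym less_le_not_le not_gr0)
    moreover have "Legendre 0 m = 0" for m :: int
      by (simp add: Legendre_def)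
    ultimately show ?thesis
      using C1 by simp
  next
    case 2
    moreover have "t \<noteq> 0"
      using 2 by (metis dvd_0_right)
    ultimately show ?thesis
      using C1 Legendre_unit_values_nat[of q t] c swap by (auto simp flip: Legendre_eq_0_iff_dvd)
  next
    case 3
    moreover have "t \<noteq> 0"
      using 3 by (metis dvd_0_right)
    ultimately show ?thesis
      using C1 Legendre_unit_values_nat[of p t] c by (auto simp flip: Legendre_eq_0_iff_dvd)
  next
    case 4
    moreover have "t \<noteq> 0"
      using 4 by (metis dvd_0_right)
    ultimately show ?thesis
      using C1 Legendre_unit_values_nat[of p t] Legendre_unit_values_nat[of q t] by (auto simp flip: Legendre_eq_0_iff_dvd)
  qed
qed

lemma wm_matrix_eq_ones_minus_pencils:
  defines "c \<equiv> of_int (Legendre (int q) (int p)) :: rat"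
  shows "wm_matrix p q g = (1/2) \<cdot>\<^sub>m
    mat (p * q) (p * q) (\<lambda>(i,j). 1 - (legendre_pencil p q c * legendre_pencil q p c) $$ (i,j))"
proof (rule eq_matI)
  fix i j
  assume "i < dim_row ((1/2) \<cdot>\<^sub>m mat (p * q) (p * q)
      (\<lambda>(i,j). 1 - (legendre_pencil p q c * legendre_pencil q p c) $$ (i,j)))"
    "j < dim_col ((1/2) \<cdot>\<^sub>m mat (p * q) (p * q)
      (\<lambda>(i,j). 1 - (legendre_pencil p q c * legendre_pencil q p c) $$ (i,j)))"
  then have i: "i < p * q" and j: "j < p * q"
    by auto
  have N: "0 < p * q"
    using p q by simp
  define t where "t = nat ((int i - int j) mod int (p * q))"
  note index = circulant_index[OF N i j, folded t_def]
  have "c * c = 1"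
    using Legendre_unit_values_nat[OF p_not_dvd_q] by (auto simp: c_def)
  moreover have "c = of_int (Legendre (int p) (int q))"
    unfolding c_def by (simp add: Legendre_swap_if_mod_4_eq_1[OF p q pq p4])
  moreover have "(legendre_pencil p q c * legendre_pencil q p c) $$ (i,j) =
    (if i = j then 1 else 0) + c * legendre_kernel p q i j + c * legendre_kernel q p i j
      + c^2 * of_int (Legendre (int i - int j) (int p) * Legendre (int i - int j) (int q))"
    using p q pq i j by (intro legendre_pencil_mult_swap) (simp_all add: primes_coprime)
  ultimately have pencils: "(legendre_pencil p q c * legendre_pencil q p c) $$ (i,j) =
    (if t = 0 then 1 else 0)
       + c * (if q dvd t then of_int (Legendre (int t) (int p)) else 0)
       + c * (if p dvd t then of_int (Legendre (int t) (int q)) else 0)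
       + of_int (Legendre (int t) (int p)) * of_int (Legendre (int t) (int q))"
    using index by (simp add: legendre_kernel_def power2_eq_square)
  have "wm_matrix p q g $$ (i,j) = wm_seq p q g t"
    using i j by (simp add: wm_matrix_def t_def)
  also have "\<dots> = (if t \<in> wm_C1 p q g then 1 else 0)"
    using index(1) by (simp add: wm_seq_def)
  finally show "wm_matrix p q g $$ (i,j) = ((1/2) \<cdot>\<^sub>m mat (p * q) (p * q)
      (\<lambda>(i,j). 1 - (legendre_pencil p q c * legendre_pencil q p c) $$ (i,j))) $$ (i,j)"
    using wm_seq_Legendre[OF index(1)] pencils i j by (simp add: c_def)
qed (auto simp: wm_matrix_def)

lemma det_wm_matrix:
  "det (wm_matrix p q g) = (1/2) ^ (p * q) * (of_nat (p * q) - 1)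
     * (1 - of_nat p) ^ ((p * q - q) div 2) * (1 + of_nat q) ^ ((q * p - p) div 2)"
proof -
  define c :: rat where "c = of_int (Legendre (int q) (int p))"
  have c: "c^2 = 1"
    using Legendre_unit_values_nat[OF p_not_dvd_q] by (auto simp: c_def power2_eq_square)
  have cop: "coprime p q"
    using p q pq by (simp add: primes_coprime)
  have carrier: "legendre_pencil p q c \<in> carrier_mat (p * q) (p * q)"
    "legendre_pencil q p c \<in> carrier_mat (p * q) (p * q)"
    by (simp_all add: legendre_pencil_def mult.commute)
  have "i < p * q \<Longrightarrow> (\<Sum>k = 0..<p * q. (legendre_pencil p q c * legendre_pencil q p c) $$ (i,k)) = 1"
    for i
    using p q cop
    by (intro mat_row_sum_mult_eq_1[OF carrier] legendre_pencil_row_sum[of p q]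
        legendre_pencil_row_sum[of q p, unfolded mult.commute[of q p]])
       (simp_all add: coprime_commute)
  moreover have "1 < p * q"
    using p q by (simp add: one_less_mult)
  ultimately have ones_minus: "det (mat (p * q) (p * q) (\<lambda>(i,j). 1 - (legendre_pencil p q c * legendre_pencil q p c) $$ (i,j)))
      = (-1) ^ Suc (p * q) * (of_nat (p * q) - 1) * (det (legendre_pencil p q c) * det (legendre_pencil q p c))"
    using det_ones_minus_row_stochastic[OF mult_carrier_mat[OF carrier]] det_mult[OF carrier] by simp
  have "odd (p * q)"
    using p q by (simp add: prime_odd_nat)
  have "even ((p - 1) div 2)" and "odd ((q - 1) div 2)"
    using p4 q4 by presburger+
  then have "Legendre (-1) (int p) = 1" and "Legendre (-1) (int q) = -1"
    using Legendre_minus_one[OF p] Legendre_minus_one[OF q] by simp_all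
  then have "det (legendre_pencil p q c) = (1 - of_nat p) ^ ((p * q - q) div 2)"
    and "det (legendre_pencil q p c) = (1 + of_nat q) ^ ((q * p - p) div 2)"
    using det_legendre_pencil[of p q c] det_legendre_pencil[of q p c] p q cop c
    by (simp_all add: coprime_commute)
  with ones_minus \<open>odd (p * q)\<close>
  have "det (mat (p * q) (p * q) (\<lambda>(i,j). 1 - (legendre_pencil p q c * legendre_pencil q p c) $$ (i,j)))
      = (of_nat (p * q) - 1) * ((1 - of_nat p) ^ ((p * q - q) div 2) * (1 + of_nat q) ^ ((q * p - p) div 2))"
    by (simp flip: mult_minus_left)
  then show ?thesis
    using wm_matrix_eq_ones_minus_pencils by (simp add: c_def mult.assoc)
qed

end

section \<open>The closed form\<close>

lemma power_halves_regroup: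
  fixes x y M :: "'a::field"
  shows "(1/2) ^ (1 + 2*k + 2*l + 4*h) * M * x ^ (k + 2*h) * y ^ (l + 2*h)
    = M / 2 * (x / 4) ^ k * (y / 4) ^ l * ((x * y / 4)^2) ^ h"
proof -
  have halves: "(1/2::'a) ^ (1 + 2*k + 2*l + 4*h) = 1/2 * (1/4) ^ k * (1/4) ^ l * (1/16) ^ h"
  proof -
    have "(1/2::'a) ^ (1 + 2*k + 2*l + 4*h) = 1/2 * ((1/2)^2) ^ k * ((1/2)^2) ^ l * ((1/2)^4) ^ h"
      by (simp add: power_add power_mult)
    moreover have "(1/2::'a)^4 = 1/16" and "(1/2::'a)^2 = 1/4"
      by (simp_all add: power_divide)
    ultimately show ?thesis
      by simp
  qed
  have "x ^ (k + 2*h) = x ^ k * (x^2) ^ h" and "y ^ (l + 2*h) = y ^ l * (y^2) ^ h"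
    by (simp_all add: power_add power_mult)
  moreover have "(x / 4) ^ k = x ^ k * (1/4) ^ k" and "(y / 4) ^ l = y ^ l * (1/4) ^ l"
    by (simp_all only: power_divide power_one times_divide_eq_right mult_1_right)
  moreover have "((x * y / 4)^2) ^ h = (x^2) ^ h * (y^2) ^ h * (1/16) ^ h"
  proof -
    have "(x * y / 4)^2 = x^2 * y^2 * (1/16)"
      by (simp add: power2_eq_square)
    then show ?thesis
      by (simp only: power_mult_distrib)
  qed
  ultimately show ?thesis
    unfolding halves by (simp add: mult_ac)
qed

lemma closed_form_regroup:
  fixes p q :: nat and M :: rat
  assumes "odd p" "odd q"
  shows "(1/2) ^ (p * q) * M * (1 - of_nat p) ^ ((p * q - q) div 2) * (1 + of_nat q) ^ ((q * p - p) div 2)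
    = M / 2 * ((1 - of_nat p) / 4) ^ ((p - 1) div 2) * ((1 + of_nat q) / 4) ^ ((q - 1) div 2)
      * (((of_nat p - 1) * (of_nat q + 1) / 4)^2) ^ (wm_e p q div 2)"
proof -
  obtain k l where p: "p = 2 * k + 1" and q: "q = 2 * l + 1"
    using assms by (metis oddE)
  have "p * q = 1 + 2*k + 2*l + 4*(k*l)" and "(p * q - q) div 2 = k + 2*(k*l)"
    and "(q * p - p) div 2 = l + 2*(k*l)" and "(p - 1) div 2 = k" and "(q - 1) div 2 = l"
    and "wm_e p q div 2 = k * l"
    by (simp_all add: p q wm_e_def algebra_simps)
  moreover have "((of_nat p - 1) * (of_nat q + 1) / 4)^2 = (((1 - of_nat p) * (1 + of_nat q) / 4)^2 :: rat)"
    by (simp add: power2_eq_square algebra_simps)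
  ultimately show ?thesis
    using power_halves_regroup[of k l "k * l" M "1 - of_nat p" "1 + of_nat q"] by simp
qed

lemma Delta_minus_one_eq_square:
  fixes x y :: rat
  defines "d \<equiv> (y - x - 2) / 4"
  shows "(1 + x * y) ^ 2 / 16 + (-1 - d) / 2 * (x * y) + d ^ 2 + 3 / 2 * d + 1 / 2
    = ((x - 1) * (y + 1) / 4) ^ 2"
  unfolding d_def by (simp add: field_simps power2_eq_square)

theorem lemma6:
  fixes p q g :: nat
  assumes "prime p" and "prime q" and "p \<noteq> q" and "odd p" and "odd q"
    and "p mod 4 = 1" and "q mod 4 = 3"
    and "gcd (p - 1) (q - 1) = 2"
    and "residue_primroot p g" and "residue_primroot q g"
  shows "\<exists>\<epsilon>::rat. \<epsilon> \<in> {1, -1} \<and>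
    (let N = p * q; e = wm_e p q;
         d = (of_nat q - of_nat p - 2) / 4 :: rat;
         \<Delta> = (1 + of_nat N) ^ 2 / 16 + (\<epsilon> - d) / 2 * of_nat N + d ^ 2 + 3 / 2 * d + 1 / 2
     in det (wm_matrix p q g) =
        (of_nat N - 1) / 2 * ((1 - of_nat p) / 4) ^ ((p - 1) div 2)
          * ((1 + of_nat q) / 4) ^ ((q - 1) div 2) * \<Delta> ^ (e div 2))"
proof -
  have "2 < p" and "2 < q"
    using assms(1,2,4,5) odd_prime_gt_2 by blast+
  then have "det (wm_matrix p q g) =
      (of_nat (p * q) - 1) / 2 * ((1 - of_nat p) / 4) ^ ((p - 1) div 2)
        * ((1 + of_nat q) / 4) ^ ((q - 1) div 2)
        * (((of_nat p - 1) * (of_nat q + 1) / 4)^2) ^ (wm_e p q div 2)"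
    using det_wm_matrix[of p q g] closed_form_regroup[OF assms(4,5)] assms by simp
  moreover have "((of_nat p - 1) * (of_nat q + 1) / 4 :: rat)^2 =
      (1 + of_nat (p * q)) ^ 2 / 16 + (-1 - (of_nat q - of_nat p - 2) / 4) / 2 * of_nat (p * q)
        + ((of_nat q - of_nat p - 2) / 4) ^ 2 + 3 / 2 * ((of_nat q - of_nat p - 2) / 4) + 1 / 2"
    by (simp only: of_nat_mult Delta_minus_one_eq_square)
  ultimately show ?thesis
    by (intro exI[of _ "-1"]) (simp add: Let_def)
qed

end
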